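(* Let $X$ be a Tychonoff space which is a finite union $X=X_1\cup\dots\cup X_k$ of closed subsets $X_i$, each of which is a $\Delta$-space. Then $X$ is a $\Delta$-space. In particular, a finite union of compact $\Delta$-subspaces of a Hausdorff space is a $\Delta$-space.
   Context: A topological space $X$ is a $\Delta$-space if for every decreasing sequence $\{D_n:n\in\omega\}$ of subsets of $X$ with $\bigcap_n D_n=\emptyset$ there is a decreasing sequence $\{V_n:n\in\omega\}$ of open subsets of $X$ with $D_n\subseteq V_n$ for all $n$ and $\bigcap_n V_n=\emptyset$. *)

theory Defs
  imports "HOL-Analysis.Analysis"
begin

definition tychonoff_space :: "'a topology \<Rightarrow> bool" where
  "tychonoff_space X \<longleftrightarrow> completely_regular_space X \<and> Hausdorff_space X"

definition delta_space :: "'a topology \<Rightarrow> bool" where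
  "delta_space X \<longleftrightarrow>
    (\<forall>D :: nat \<Rightarrow> 'a set.
       (\<forall>n. D n \<subseteq> topspace X) \<and> (\<forall>n. D (Suc n) \<subseteq> D n) \<and> (\<Inter>n. D n) = {}
       \<longrightarrow> (\<exists>V :: nat \<Rightarrow> 'a set.
              (\<forall>n. openin X (V n)) \<and> (\<forall>n. V (Suc n) \<subseteq> V n) \<and>
              (\<forall>n. D n \<subseteq> V n) \<and> (\<Inter>n. V n) = {}))"

end

theory Submission
  imports Defs
begin

text \<open>Expand the trace of the sequence on each piece \<open>X\<^sub>i\<close> to relatively open sets \<open>W\<^sub>i n\<close>.
  The sets \<open>X\<^sub>i - W\<^sub>i n\<close> are closed in \<open>X\<close>, and \<open>V n = X - \<Union>\<^sub>i (X\<^sub>i - W\<^sub>i n)\<close> is the required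
  open expansion: a point in every \<open>V n\<close> lies in some \<open>X\<^sub>i\<close> and then in every \<open>W\<^sub>i n\<close>.
  Finiteness of the cover is what makes \<open>V n\<close> open.\<close>

lemma delta_spaceD:
  assumes "delta_space X"
    and "\<And>n. D n \<subseteq> topspace X" "\<And>n. D (Suc n) \<subseteq> D n" "(\<Inter>n. D n) = {}"
  obtains V where "\<And>n. openin X (V n)" "\<And>n. V (Suc n) \<subseteq> V n" "\<And>n. D n \<subseteq> V n"
    "(\<Inter>n. V n) = {}"
  using assms unfolding delta_space_def by metis

lemma closedin_diff_openin_subtopology:
  assumes "closedin X S" "openin (subtopology X S) W"
  shows "closedin X (S - W)"
proof -
  have "closedin (subtopology X S) (topspace (subtopology X S) - W)"
    using assms(2) by (intro closedin_diff closedin_topspace)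
  moreover have "topspace (subtopology X S) - W = S - W"
    using closedin_subset[OF assms(1)] by auto
  ultimately show ?thesis
    using closedin_closed_subtopology[OF assms(1)] by auto
qed

lemma delta_space_finite_closed_Union:
  assumes fin: "finite I"
    and cover: "topspace X = (\<Union>i\<in>I. Xs i)"
    and closed: "\<And>i. i \<in> I \<Longrightarrow> closedin X (Xs i)"
    and delta: "\<And>i. i \<in> I \<Longrightarrow> delta_space (subtopology X (Xs i))"
  shows "delta_space X"
  unfolding delta_space_def
proof (intro allI impI, elim conjE)
  fix D :: "nat \<Rightarrow> _ set"
  assume D_sub: "\<forall>n. D n \<subseteq> topspace X" and D_dec: "\<forall>n. D (Suc n) \<subseteq> D n"
    and D_empty: "(\<Inter>n. D n) = {}"
  have "\<exists>W. (\<forall>n. openin (subtopology X (Xs i)) (W n)) \<and> (\<forall>n. W (Suc n) \<subseteq> W n) \<and>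
            (\<forall>n. D n \<inter> Xs i \<subseteq> W n) \<and> (\<Inter>n. W n) = {}" if "i \<in> I" for i
  proof -
    have "D n \<inter> Xs i \<subseteq> topspace (subtopology X (Xs i))" for n
      using D_sub by auto
    moreover have "D (Suc n) \<inter> Xs i \<subseteq> D n \<inter> Xs i" for n
      using D_dec by auto
    moreover have "(\<Inter>n. D n \<inter> Xs i) = {}"
      using D_empty by auto
    ultimately show ?thesis
      by (rule delta_spaceD[OF delta[OF that]]) blast
  qed
  then obtain W where
    W_open: "\<And>i n. i \<in> I \<Longrightarrow> openin (subtopology X (Xs i)) (W i n)" and
    W_dec: "\<And>i n. i \<in> I \<Longrightarrow> W i (Suc n) \<subseteq> W i n" and
    W_sup: "\<And>i n. i \<in> I \<Longrightarrow> D n \<inter> Xs i \<subseteq> W i n" and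
    W_empty: "\<And>i. i \<in> I \<Longrightarrow> (\<Inter>n. W i n) = {}"
    by metis
  define V where "V n = topspace X - (\<Union>i\<in>I. Xs i - W i n)" for n
  show "\<exists>V. (\<forall>n. openin X (V n)) \<and> (\<forall>n. V (Suc n) \<subseteq> V n) \<and> (\<forall>n. D n \<subseteq> V n) \<and>
            (\<Inter>n. V n) = {}"
  proof (intro exI conjI allI)
    fix n
    show "openin X (V n)"
      unfolding V_def using fin
      by (intro openin_diff openin_topspace closedin_Union finite_imageI)
        (auto intro: closedin_diff_openin_subtopology closed W_open)
    show "V (Suc n) \<subseteq> V n"
      unfolding V_def using W_dec by blast
    show "D n \<subseteq> V n"
      unfolding V_def using D_sub W_sup by blast
  next
    show "(\<Inter>n. V n) = {}"
    proof (rule equals0I)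
      fix x assume x: "x \<in> (\<Inter>n. V n)"
      then obtain i where i: "i \<in> I" "x \<in> Xs i"
        using cover unfolding V_def by auto
      then have "x \<in> (\<Inter>n. W i n)"
        using x unfolding V_def by blast
      then show False
        using W_empty[OF i(1)] by blast
    qed
  qed
qed

lemma delta_space_finite_compact_Union:
  assumes "Hausdorff_space Y" "finite I"
    and "\<And>i. i \<in> I \<Longrightarrow> compactin Y (Ks i)"
    and "\<And>i. i \<in> I \<Longrightarrow> delta_space (subtopology Y (Ks i))"
  shows "delta_space (subtopology Y (\<Union>i\<in>I. Ks i))"
proof (rule delta_space_finite_closed_Union[where Xs = Ks])
  show "topspace (subtopology Y (\<Union>i\<in>I. Ks i)) = (\<Union>i\<in>I. Ks i)"
    using assms(3) compactin_subset_topspace by fastforce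
next
  fix i assume i: "i \<in> I"
  then have sub: "Ks i \<subseteq> (\<Union>i\<in>I. Ks i)"
    by auto
  show "closedin (subtopology Y (\<Union>i\<in>I. Ks i)) (Ks i)"
    using compactin_imp_closedin[OF assms(1) assms(3)[OF i]] sub closedin_subset_topspace
    by blast
  show "delta_space (subtopology (subtopology Y (\<Union>i\<in>I. Ks i)) (Ks i))"
    using assms(4)[OF i] sub by (simp add: subtopology_subtopology Int_absorb1)
qed (use assms(2) in auto)

theorem proposition5p4:
  shows "(\<forall>(X :: 'a topology) (k :: nat) (Xs :: nat \<Rightarrow> 'a set).
            tychonoff_space X \<and> topspace X = (\<Union>i<k. Xs i) \<and>
            (\<forall>i<k. closedin X (Xs i) \<and> delta_space (subtopology X (Xs i)))
            \<longrightarrow> delta_space X)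
       \<and> (\<forall>(Y :: 'b topology) (k :: nat) (Ks :: nat \<Rightarrow> 'b set).
            Hausdorff_space Y \<and>
            (\<forall>i<k. Ks i \<subseteq> topspace Y \<and> compactin Y (Ks i) \<and> delta_space (subtopology Y (Ks i)))
            \<longrightarrow> delta_space (subtopology Y (\<Union>i<k. Ks i)))"
proof (intro conjI allI impI; elim conjE)
  fix X :: "'a topology" and k and Xs :: "nat \<Rightarrow> 'a set"
  assume "topspace X = (\<Union>i<k. Xs i)"
    and "\<forall>i<k. closedin X (Xs i) \<and> delta_space (subtopology X (Xs i))"
  then show "delta_space X"
    by (intro delta_space_finite_closed_Union[of "{..<k}" X Xs]) auto
next
  fix Y :: "'b topology" and k and Ks :: "nat \<Rightarrow> 'b set"
  assume "Hausdorff_space Y"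
    and "\<forall>i<k. Ks i \<subseteq> topspace Y \<and> compactin Y (Ks i) \<and> delta_space (subtopology Y (Ks i))"
  then show "delta_space (subtopology Y (\<Union>i<k. Ks i))"
    by (intro delta_space_finite_compact_Union) auto
qed

end
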